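(* The first difference sequence $\Delta(\mathbf{t}_{3/2})$ equals the Toeplitz word $\mathcal{T}(w)$ determined by the pattern $w=01?0?10??$ (a $(9,4)$-Toeplitz word).
   Context: The Thue--Morse word in base $3/2$ is the unique binary sequence $\mathbf{t}_{3/2}=(t_n)_{n\ge0}$ with $t_0=0$, $t_{3n}=t_{3n+1}=t_{2n}$ and $t_{3n+2}=1-t_{2n+1}$ for all $n\ge0$ (equivalently, $t_n$ is the digit sum modulo $2$ of the base-$3/2$ expansion of $n$, where $\langle 0\rangle$ is empty and $\langle n\rangle=\langle m\rangle d$ for $2n=3m+d$, $d\in\{0,1,2\}$). For a binary sequence $\mathbf{x}=(x_n)$, $\Delta(\mathbf{x})=(x_{n+1}-x_n\bmod 2)_{n\ge0}$. Toeplitz words: let $A$ be an alphabet and $?\notin A$; for a word $w\in A(A\cup\{?\})^*$ and an infinite word $\mathbf{u}$ over $A\cup\{?\}$, let $F_w(\mathbf{u})$ be the word obtained by replacing the successive occurrences of $?$ in $\mathbf{u}$ by the successive letters of $w^\omega=www\cdots$. Set $\mathcal{T}_0(w)=?^\omega$, $\mathcal{T}_{i+1}(w)=F_w(\mathcal{T}_i(w))$; the limit $\mathcal{T}(w)=\lim_i\mathcal{T}_i(w)\in A^{\mathbb{N}}$ exists and is the Toeplitz word determined by $w$; if $|w|=p$ and $w$ has $q$ occurrences of $?$, it is called a $(p,q)$-Toeplitz word. *)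

theory Defs
  imports Main
begin

text \<open>Digit sum of the base-3/2 expansion: the expansion of 0 is empty, and
  the expansion of n > 0 is that of m followed by digit d, where 2n = 3m + d,
  d \<in> {0,1,2}.\<close>
function ds32 :: "nat \<Rightarrow> nat" where
  "ds32 n = (if n = 0 then 0 else ds32 ((2 * n) div 3) + (2 * n) mod 3)"
  by auto
termination
  by (relation "measure id") auto

declare ds32.simps [simp del]

definition tm32 :: "nat \<Rightarrow> int" where
  "tm32 n = int (ds32 n mod 2)"

definition Delta :: "(nat \<Rightarrow> int) \<Rightarrow> nat \<Rightarrow> int" where
  "Delta x n = (x (Suc n) - x n) mod 2"

text \<open>Words over A \<union> {?} are represented with option: None is the hole ?.
  F_w u replaces the successive holes of u by the successive letters of w^\<omega>.\<close>
definition Fw :: "'a option list \<Rightarrow> (nat \<Rightarrow> 'a option) \<Rightarrow> nat \<Rightarrow> 'a option" where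
  "Fw w u n = (case u n of
       Some a \<Rightarrow> Some a
     | None \<Rightarrow> w ! (card {k. k < n \<and> u k = None} mod length w))"

definition toeplitz_approx :: "'a option list \<Rightarrow> nat \<Rightarrow> nat \<Rightarrow> 'a option" where
  "toeplitz_approx w i = (Fw w ^^ i) (\<lambda>_. None)"

text \<open>The limit (pointwise, i.e. in the product of discrete topologies) of
  the approximations T_i(w).\<close>
definition toeplitz :: "'a option list \<Rightarrow> nat \<Rightarrow> 'a" where
  "toeplitz w n = (THE a. \<exists>i0. \<forall>i\<ge>i0. toeplitz_approx w i n = Some a)"

end

theory Submission
  imports Defs
begin

text \<open>Write \<open>d\<close> for the difference sequence. The recurrences defining the Thue--Morse word in
  base 3/2 give \<open>d(3n) = 0\<close>, \<open>d(3n+1) = 1 - d(2n)\<close> and \<open>d(3n+2) = 1 - d(2n+1)\<close>. Applied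
  twice they show that \<open>d(9k+r)\<close> is the letter \<open>w\<^sub>r\<close> of \<open>w = 01?0?10??\<close>, or \<open>d(4k+j)\<close> when
  \<open>r\<close> is the \<open>j\<close>-th hole of \<open>w\<close>: so \<open>d\<close> is \<open>w\<^sup>\<omega>\<close> with its holes filled by \<open>d\<close> itself.
  Every such sequence is the Toeplitz word of \<open>w\<close>, provided \<open>w\<close> starts with a letter: each
  approximation \<open>T\<^sub>i(w)\<close> agrees with it where defined, and a hole surviving at position \<open>n\<close>
  after \<open>i\<close> rounds has index at most \<open>n - i\<close>, so \<open>T\<^sub>i(w)\<close> is defined at \<open>n\<close> once \<open>i > n\<close>.\<close>

definition hole_count :: "(nat \<Rightarrow> 'a option) \<Rightarrow> nat \<Rightarrow> nat" where
  "hole_count u n = card {k. k < n \<and> u k = None}"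

definition periodic_word :: "'a option list \<Rightarrow> nat \<Rightarrow> 'a option" where
  "periodic_word w k = w ! (k mod length w)"

definition toeplitz_fixpoint :: "'a option list \<Rightarrow> (nat \<Rightarrow> 'a) \<Rightarrow> bool" where
  "toeplitz_fixpoint w x \<longleftrightarrow>
     (\<forall>n. case periodic_word w n of
            Some a \<Rightarrow> x n = a
          | None \<Rightarrow> x n = x (hole_count (periodic_word w) n))"

lemma hole_count_0 [simp]: "hole_count u 0 = 0"
  by (simp add: hole_count_def)

lemma hole_count_Suc:
  "hole_count u (Suc n) = hole_count u n + (if u n = None then 1 else 0)"
proof -
  have "{k. k < Suc n \<and> u k = None} =
      {k. k < n \<and> u k = None} \<union> (if u n = None then {n} else {})"
    by (auto simp: less_Suc_eq)
  then show ?thesis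
    by (simp add: hole_count_def)
qed

lemma hole_count_less:
  assumes "u 0 \<noteq> None" and "0 < m"
  shows "hole_count u m < m"
proof -
  have "{k. k < m \<and> u k = None} \<subseteq> {1..<m}"
    using assms(1) by (auto simp: Suc_le_eq) (metis gr0I option.distinct(1))
  then have "hole_count u m \<le> m - 1"
    unfolding hole_count_def by (metis card_atLeastLessThan card_mono finite_atLeastLessThan)
  with assms(2) show ?thesis
    by linarith
qed

lemma hole_count_periodic_word_add:
  "hole_count (periodic_word w) (n + length w) =
     hole_count (periodic_word w) n + hole_count (periodic_word w) (length w)"
  by (induction n) (simp_all add: hole_count_Suc periodic_word_def)

lemma hole_count_periodic_word_mult_add:
  "hole_count (periodic_word w) (length w * k + r) =
     k * hole_count (periodic_word w) (length w) + hole_count (periodic_word w) r"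
proof (induction k)
  case (Suc k)
  have "length w * Suc k + r = (length w * k + r) + length w"
    by simp
  then show ?case
    using Suc.IH by (simp only: hole_count_periodic_word_add) simp
qed simp

lemma hole_count_periodic_word_take:
  "r \<le> length w \<Longrightarrow> hole_count (periodic_word w) r = count_list (take r w) None"
  by (induction r) (simp_all add: hole_count_Suc periodic_word_def take_Suc_conv_app_nth)

lemma Fw_apply:
  "Fw w u n = (case u n of Some a \<Rightarrow> Some a | None \<Rightarrow> periodic_word w (hole_count u n))"
  unfolding Fw_def hole_count_def periodic_word_def ..

lemma Fw_eq_None_iff:
  "Fw w u n = None \<longleftrightarrow> u n = None \<and> periodic_word w (hole_count u n) = None"
  by (cases "u n") (simp_all add: Fw_apply)

lemma hole_count_Fw:
  "hole_count (Fw w u) n = hole_count (periodic_word w) (hole_count u n)"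
  by (induction n) (auto simp: hole_count_Suc Fw_eq_None_iff)

lemma toeplitz_approx_0: "toeplitz_approx w 0 = (\<lambda>_. None)"
  by (simp add: toeplitz_approx_def)

lemma toeplitz_approx_Suc: "toeplitz_approx w (Suc i) = Fw w (toeplitz_approx w i)"
  by (simp add: toeplitz_approx_def)

lemma toeplitz_approx_agrees:
  assumes "toeplitz_fixpoint w x"
  shows "case toeplitz_approx w i n of
           Some a \<Rightarrow> x n = a
         | None \<Rightarrow> x n = x (hole_count (toeplitz_approx w i) n)"
proof (induction i)
  case 0
  show ?case
    by (simp add: toeplitz_approx_0 hole_count_def)
next
  case (Suc i)
  let ?u = "toeplitz_approx w i"
  show ?case
  proof (cases "?u n")
    case None
    then have "x n = x (hole_count ?u n)"
      using Suc.IH by simp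
    moreover have "case periodic_word w (hole_count ?u n) of
        Some a \<Rightarrow> x (hole_count ?u n) = a
      | None \<Rightarrow> x (hole_count ?u n) = x (hole_count (periodic_word w) (hole_count ?u n))"
      using assms unfolding toeplitz_fixpoint_def by blast
    ultimately show ?thesis
      using None by (simp add: toeplitz_approx_Suc Fw_apply hole_count_Fw split: option.split_asm)
  qed (use Suc.IH in \<open>simp add: toeplitz_approx_Suc Fw_apply\<close>)
qed

text \<open>Each step strictly decreases the index of a surviving hole, because \<open>w\<close> starts with a letter.\<close>
lemma toeplitz_approx_None_bound:
  assumes "w ! 0 \<noteq> None" and "toeplitz_approx w i n = None"
  shows "hole_count (toeplitz_approx w i) n + i \<le> n"
  using assms(2)
proof (induction i)
  case 0
  show ?case
    by (simp add: toeplitz_approx_0 hole_count_def)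
next
  case (Suc i)
  let ?m = "hole_count (toeplitz_approx w i) n"
  have "toeplitz_approx w i n = None" and hole: "periodic_word w ?m = None"
    using Suc.prems by (simp_all add: toeplitz_approx_Suc Fw_eq_None_iff)
  moreover have "0 < ?m"
    using hole assms(1) by (intro gr0I) (auto simp: periodic_word_def)
  ultimately have "hole_count (periodic_word w) ?m < ?m"
    using assms(1) by (intro hole_count_less) (simp_all add: periodic_word_def)
  then show ?case
    using Suc.IH \<open>toeplitz_approx w i n = None\<close>
    by (simp add: toeplitz_approx_Suc hole_count_Fw)
qed

lemma toeplitz_eqI:
  assumes "w ! 0 \<noteq> None" and "toeplitz_fixpoint w x"
  shows "toeplitz w = x"
proof
  fix n
  have approx: "toeplitz_approx w i n = Some (x n)" if "n < i" for i
  proof (cases "toeplitz_approx w i n")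
    case None
    then show ?thesis
      using toeplitz_approx_None_bound[OF assms(1) None] that by linarith
  next
    case (Some a)
    then show ?thesis
      using toeplitz_approx_agrees[OF assms(2), where i = i and n = n] by simp
  qed
  show "toeplitz w n = x n"
    unfolding toeplitz_def
  proof (rule the_equality)
    show "\<exists>i0. \<forall>i\<ge>i0. toeplitz_approx w i n = Some (x n)"
      using approx by (intro exI[of _ "Suc n"]) simp
  next
    fix a
    assume "\<exists>i0. \<forall>i\<ge>i0. toeplitz_approx w i n = Some a"
    then obtain i0 where "\<forall>i\<ge>i0. toeplitz_approx w i n = Some a"
      by blast
    then have "toeplitz_approx w (max i0 (Suc n)) n = Some a"
      by simp
    then show "a = x n"
      using approx[of "max i0 (Suc n)"] by simp
  qed
qed

lemma ds32_unfold: "0 < n \<Longrightarrow> ds32 n = ds32 (2 * n div 3) + 2 * n mod 3"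
  by (subst ds32.simps) simp

lemma ds32_3n: "ds32 (3 * n) = ds32 (2 * n)"
  by (cases "n = 0") (simp_all add: ds32_unfold)

lemma ds32_3n_1: "ds32 (3 * n + 1) = ds32 (2 * n) + 2"
proof -
  have "2 * (3 * n + 1) div 3 = 2 * n" "2 * (3 * n + 1) mod 3 = 2"
    by presburger+
  then show ?thesis
    by (simp add: ds32_unfold)
qed

lemma ds32_3n_2: "ds32 (3 * n + 2) = ds32 (2 * n + 1) + 1"
proof -
  have "2 * (3 * n + 2) div 3 = 2 * n + 1" "2 * (3 * n + 2) mod 3 = 1"
    by presburger+
  then show ?thesis
    by (simp add: ds32_unfold)
qed

lemma tm32_bounds: "0 \<le> tm32 n" "tm32 n < 2"
  by (simp_all add: tm32_def)

lemma tm32_3n: "tm32 (3 * n) = tm32 (2 * n)"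
  unfolding tm32_def ds32_3n ..

lemma tm32_3n_1: "tm32 (3 * n + 1) = tm32 (2 * n)"
  unfolding tm32_def ds32_3n_1 by simp

lemma tm32_3n_2: "tm32 (3 * n + 2) = 1 - tm32 (2 * n + 1)"
  unfolding tm32_def ds32_3n_2 by presburger

lemma Delta_tm32_3n: "Delta tm32 (3 * n) = 0"
proof -
  have "Suc (3 * n) = 3 * n + 1"
    by simp
  then show ?thesis
    by (simp only: Delta_def tm32_3n tm32_3n_1) simp
qed

lemma Delta_tm32_3n_1: "Delta tm32 (3 * n + 1) = 1 - Delta tm32 (2 * n)"
proof -
  have "Suc (3 * n + 1) = 3 * n + 2" "Suc (2 * n) = 2 * n + 1"
    by simp_all
  then show ?thesis
    using tm32_bounds[of "2 * n"] tm32_bounds[of "2 * n + 1"]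
    by (simp only: Delta_def tm32_3n_1 tm32_3n_2) presburger
qed

lemma Delta_tm32_3n_2: "Delta tm32 (3 * n + 2) = 1 - Delta tm32 (2 * n + 1)"
proof -
  have "Suc (3 * n + 2) = 3 * (n + 1)" "Suc (2 * n + 1) = 2 * (n + 1)"
    by simp_all
  then show ?thesis
    using tm32_bounds[of "2 * n + 1"] tm32_bounds[of "2 * (n + 1)"]
    by (simp only: Delta_def tm32_3n tm32_3n_2) presburger
qed

lemma Delta_tm32_9k:
  "Delta tm32 (9 * k) = 0"
  "Delta tm32 (9 * k + 1) = 1"
  "Delta tm32 (9 * k + 2) = Delta tm32 (4 * k)"
  "Delta tm32 (9 * k + 3) = 0"
  "Delta tm32 (9 * k + 4) = Delta tm32 (4 * k + 1)"
  "Delta tm32 (9 * k + 5) = 1"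
  "Delta tm32 (9 * k + 6) = 0"
  "Delta tm32 (9 * k + 7) = Delta tm32 (4 * k + 2)"
  "Delta tm32 (9 * k + 8) = Delta tm32 (4 * k + 3)"
proof -
  show "Delta tm32 (9 * k) = 0"
    using Delta_tm32_3n[of "3 * k"] by simp
  show "Delta tm32 (9 * k + 1) = 1"
    using Delta_tm32_3n_1[of "3 * k"] Delta_tm32_3n[of "2 * k"] by simp
  show "Delta tm32 (9 * k + 2) = Delta tm32 (4 * k)"
    using Delta_tm32_3n_2[of "3 * k"] Delta_tm32_3n_1[of "2 * k"] by simp
  show "Delta tm32 (9 * k + 3) = 0"
    using Delta_tm32_3n[of "3 * k + 1"] by (simp add: algebra_simps)
  have "2 * (3 * k + 1) = 3 * (2 * k) + 2"
    by simp
  then show "Delta tm32 (9 * k + 4) = Delta tm32 (4 * k + 1)"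
    using Delta_tm32_3n_1[of "3 * k + 1"] Delta_tm32_3n_2[of "2 * k"]
    by (simp only:) (simp add: algebra_simps)
  have "2 * (3 * k + 1) + 1 = 3 * (2 * k + 1)"
    by simp
  then show "Delta tm32 (9 * k + 5) = 1"
    using Delta_tm32_3n_2[of "3 * k + 1"] Delta_tm32_3n[of "2 * k + 1"]
    by (simp only:) (simp add: algebra_simps)
  show "Delta tm32 (9 * k + 6) = 0"
    using Delta_tm32_3n[of "3 * k + 2"] by (simp add: algebra_simps)
  have "2 * (3 * k + 2) = 3 * (2 * k + 1) + 1"
    by simp
  then show "Delta tm32 (9 * k + 7) = Delta tm32 (4 * k + 2)"
    using Delta_tm32_3n_1[of "3 * k + 2"] Delta_tm32_3n_1[of "2 * k + 1"]
    by (simp only:) (simp add: algebra_simps)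
  have "2 * (3 * k + 2) + 1 = 3 * (2 * k + 1) + 2" "2 * (2 * k + 1) + 1 = 4 * k + 3"
    by simp_all
  then show "Delta tm32 (9 * k + 8) = Delta tm32 (4 * k + 3)"
    using Delta_tm32_3n_2[of "3 * k + 2"] Delta_tm32_3n_2[of "2 * k + 1"]
    by (simp only:) (simp add: algebra_simps)
qed

lemma Delta_tm32_toeplitz_fixpoint:
  "toeplitz_fixpoint [Some 0, Some 1, None, Some 0, None, Some 1, Some 0, None, None] (Delta tm32)"
proof -
  define w :: "int option list"
    where "w = [Some 0, Some 1, None, Some 0, None, Some 1, Some 0, None, None]"
  have len: "length w = 9"
    by (simp add: w_def)
  have "case periodic_word w n of
          Some a \<Rightarrow> Delta tm32 n = a
        | None \<Rightarrow> Delta tm32 n = Delta tm32 (hole_count (periodic_word w) n)" for n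
  proof -
    define k r where "k = n div 9" and "r = n mod 9"
    have n: "n = 9 * k + r" and "r < 9"
      by (simp_all add: k_def r_def)
    have letter: "periodic_word w (9 * k + r) = w ! r"
      using \<open>r < 9\<close> by (simp add: len periodic_word_def)
    have "hole_count (periodic_word w) 9 = 4"
      by (simp add: w_def hole_count_periodic_word_take)
    then have index:
      "hole_count (periodic_word w) (9 * k + r) = 4 * k + hole_count (periodic_word w) r"
      using hole_count_periodic_word_mult_add[of w k r] unfolding len by simp
    consider "r = 0" | "r = 1" | "r = 2" | "r = 3" | "r = 4" | "r = 5" | "r = 6" | "r = 7" | "r = 8"
      using \<open>r < 9\<close> by linarith
    then show ?thesis
      unfolding letter index n
      by (cases; simp only: add_0_right Delta_tm32_9k;
          simp add: w_def hole_count_periodic_word_take numeral_3_eq_3)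
  qed
  then show ?thesis
    unfolding toeplitz_fixpoint_def w_def [symmetric] by blast
qed

theorem proposition11:
  shows "Delta tm32 =
    toeplitz [Some 0, Some 1, None, Some 0, None, Some 1, Some 0, None, None]"
  by (rule toeplitz_eqI [symmetric]) (simp_all add: Delta_tm32_toeplitz_fixpoint)

end
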